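(* Let $X=\mathbb S^{n_1}\times\cdots\times\mathbb S^{n_l}$ with $1\le n_1<\cdots<n_l$, and let $f:X\to X$ be a $C^1$ quasi-unipotent map such that $a_{n_1},\ldots,a_{n_l}$ are the basic eigenvalues of $f_*$ (so each $a_{n_i}=\pm1$). Then: (a) if $(-1)^{n_i}a_{n_i}=1$ for all $1\le i\le l$, then $\mathrm{MPer}_L(f)=\{1\}$; (b) if $(-1)^{n_i}a_{n_i}=-1$ for some $1\le i\le l$, then $\mathrm{MPer}_L(f)=\emptyset$.
   Context: Basic eigenvalues: integers $a_{n_1},\ldots,a_{n_l}$ such that for every $k$ the induced map $f_{*k}$ on $H_k(X;\mathbb Q)$ is diagonal in a suitable basis with diagonal entries (with multiplicity) the products $a_{n_{i_1}}\cdots a_{n_{i_s}}$ over all subsets $\{i_1<\cdots<i_s\}$ with $n_{i_1}+\cdots+n_{i_s}=k$. A map is quasi-unipotent if all eigenvalues of all $f_{*k}$ are roots of unity. The Lefschetz zeta function is $\zeta_f(t)=\exp(\sum_{m\ge1}L(f^m)t^m/m)$ with $L(f)=\sum_k(-1)^k\operatorname{trace} f_{*k}$. If $\zeta_f(t)\ne1$, it can be written (possibly in several ways) as a finite product $\zeta_f(t)=\prod_{i=1}^{N}(1+\Delta_i t^{r_i})^{m_i}$ with $\Delta_i\in\{\pm1\}$, $r_i$ positive integers and $m_i$ nonzero integers; the minimal set of Lefschetz periods $\mathrm{MPer}_L(f)$ is the intersection of the sets $\{r_1,\ldots,r_N\}$ over all such representations. If $\zeta_f(t)=1$, $\mathrm{MPer}_L(f):=\emptyset$.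 *)

theory Defs
  imports "HOL-Analysis.Analysis" "HOL-Homology.Homology" "HOL-Computational_Algebra.Formal_Power_Series"
    "HOL-Library.Multiset"
begin

text \<open>H_k(X;Q) = H_k(X;Z) tensor Q. A Q-basis of H tensor Q is represented (after scaling)
  by elements b 0, ..., b (r-1) of the abelian group G which are linearly independent
  modulo torsion and span G modulo torsion (every x has a nonzero multiple in their span).\<close>

definition qindep :: "('a, 'm) monoid_scheme \<Rightarrow> (nat \<Rightarrow> 'a) \<Rightarrow> nat \<Rightarrow> bool" where
  "qindep G b r \<longleftrightarrow> (\<forall>c :: nat \<Rightarrow> int.
     (\<exists>t::nat. t > 0 \<and> (finprod G (\<lambda>i. b i [^]\<^bsub>G\<^esub> c i) {..<r}) [^]\<^bsub>G\<^esub> t = \<one>\<^bsub>G\<^esub>)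
       \<longrightarrow> (\<forall>i<r. c i = 0))"

definition qspan :: "('a, 'm) monoid_scheme \<Rightarrow> (nat \<Rightarrow> 'a) \<Rightarrow> nat \<Rightarrow> bool" where
  "qspan G b r \<longleftrightarrow> (\<forall>x\<in>carrier G. \<exists>t::nat. \<exists>c :: nat \<Rightarrow> int. t > 0 \<and>
     x [^]\<^bsub>G\<^esub> t = finprod G (\<lambda>i. b i [^]\<^bsub>G\<^esub> c i) {..<r})"

definition qbasis :: "('a, 'm) monoid_scheme \<Rightarrow> (nat \<Rightarrow> 'a) \<Rightarrow> nat \<Rightarrow> bool" where
  "qbasis G b r \<longleftrightarrow> (\<forall>i<r. b i \<in> carrier G) \<and> qindep G b r \<and> qspan G b r"

definition qcoords :: "('a, 'm) monoid_scheme \<Rightarrow> (nat \<Rightarrow> 'a) \<Rightarrow> nat \<Rightarrow> 'a \<Rightarrow> nat \<Rightarrow> rat" where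
  "qcoords G b r x = (THE q. (\<forall>i\<ge>r. q i = 0) \<and>
     (\<exists>t::nat. \<exists>c :: nat \<Rightarrow> int. t > 0 \<and>
        x [^]\<^bsub>G\<^esub> t = finprod G (\<lambda>i. b i [^]\<^bsub>G\<^esub> c i) {..<r} \<and>
        (\<forall>i<r. q i = of_int (c i) / of_nat t)))"

definition qmatrix :: "('a, 'm) monoid_scheme \<Rightarrow> (nat \<Rightarrow> 'a) \<Rightarrow> nat \<Rightarrow> ('a \<Rightarrow> 'a) \<Rightarrow> nat \<Rightarrow> nat \<Rightarrow> rat" where
  "qmatrix G b r h i j = qcoords G b r (h (b j)) i"

definition qrank :: "('a, 'm) monoid_scheme \<Rightarrow> nat" where
  "qrank G = (SOME r. \<exists>b. qbasis G b r)"

definition qbas :: "('a, 'm) monoid_scheme \<Rightarrow> nat \<Rightarrow> 'a" where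
  "qbas G = (SOME b. qbasis G b (qrank G))"

definition qtrace :: "('a, 'm) monoid_scheme \<Rightarrow> ('a \<Rightarrow> 'a) \<Rightarrow> rat" where
  "qtrace G h = (\<Sum>j<qrank G. qmatrix G (qbas G) (qrank G) h j j)"

definition qeigenvalue :: "('a, 'm) monoid_scheme \<Rightarrow> ('a \<Rightarrow> 'a) \<Rightarrow> complex \<Rightarrow> bool" where
  "qeigenvalue G h ev \<longleftrightarrow> (\<exists>v :: nat \<Rightarrow> complex. (\<exists>i<qrank G. v i \<noteq> 0) \<and>
     (\<forall>i<qrank G. (\<Sum>j<qrank G. of_rat (qmatrix G (qbas G) (qrank G) h i j) * v j) = ev * v i))"

abbreviation fstar :: "int \<Rightarrow> 'a topology \<Rightarrow> ('a \<Rightarrow> 'a) \<Rightarrow> 'a chain set \<Rightarrow> 'a chain set" where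
  "fstar k X f \<equiv> hom_induced k X {} X {} f"

definition quasi_unipotent :: "'a topology \<Rightarrow> ('a \<Rightarrow> 'a) \<Rightarrow> bool" where
  "quasi_unipotent X f \<longleftrightarrow> (\<forall>k::nat. \<forall>ev. qeigenvalue (homology_group (int k) X) (fstar (int k) X f) ev
      \<longrightarrow> (\<exists>m::nat. m > 0 \<and> ev ^ m = 1))"

definition basic_eigenvalues ::
  "'a topology \<Rightarrow> ('a \<Rightarrow> 'a) \<Rightarrow> nat \<Rightarrow> (nat \<Rightarrow> nat) \<Rightarrow> (nat \<Rightarrow> int) \<Rightarrow> bool" where
  "basic_eigenvalues X f l n a \<longleftrightarrow> (\<forall>k::nat.
     \<exists>b r (d :: nat \<Rightarrow> rat).
       qbasis (homology_group (int k) X) b r \<and>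
       (\<forall>i<r. \<forall>j<r. qmatrix (homology_group (int k) X) b r (fstar (int k) X f) i j
                      = (if i = j then d j else 0)) \<and>
       mset (map d [0..<r]) =
         image_mset (\<lambda>S. of_int (\<Prod>i\<in>S. a i))
           (mset_set {S. S \<subseteq> {..<l} \<and> (\<Sum>i\<in>S. n i) = k}))"

definition lefschetz_number :: "'a topology \<Rightarrow> ('a \<Rightarrow> 'a) \<Rightarrow> rat" where
  "lefschetz_number X f =
     (\<Sum>k\<in>{k::nat. qrank (homology_group (int k) X) \<noteq> 0}.
        (-1) ^ k * qtrace (homology_group (int k) X) (fstar (int k) X f))"

definition lefschetz_zeta :: "'a topology \<Rightarrow> ('a \<Rightarrow> 'a) \<Rightarrow> rat fps" where
  "lefschetz_zeta X f = fps_exp 1 oo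
     Abs_fps (\<lambda>m. if m = 0 then 0 else lefschetz_number X (f ^^ m) / of_nat m)"

definition zeta_repr :: "rat fps \<Rightarrow> (int \<times> nat \<times> int) list \<Rightarrow> bool" where
  "zeta_repr z rs \<longleftrightarrow>
     (\<forall>(\<Delta>, r, m)\<in>set rs. (\<Delta> = 1 \<or> \<Delta> = -1) \<and> r > 0 \<and> m \<noteq> 0) \<and>
     z = (\<Prod>(\<Delta>, r, m)\<leftarrow>rs. (1 + fps_const (of_int \<Delta>) * fps_X ^ r) powi m)"

definition MPer_L :: "'a topology \<Rightarrow> ('a \<Rightarrow> 'a) \<Rightarrow> nat set" where
  "MPer_L X f = (if lefschetz_zeta X f = 1 then {}
     else \<Inter> {set (map (\<lambda>(\<Delta>, r, m). r) rs) | rs. zeta_repr (lefschetz_zeta X f) rs})"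

text \<open>The coordinates of R^N (type 'd) are split into blocks blk d; block i has n i + 1
  coordinates, and X is the set of points whose restriction to every block lies on the unit
  sphere, i.e. X = S^(n 0) x ... x S^(n (l-1)) embedded in R^N.\<close>
definition sphere_prod :: "('d::finite \<Rightarrow> nat) \<Rightarrow> nat \<Rightarrow> (real^'d) set" where
  "sphere_prod blk l = {x. \<forall>i<l. (\<Sum>d\<in>{d. blk d = i}. (x $ d)\<^sup>2) = 1}"

definition C1_map_on :: "('a::euclidean_space) set \<Rightarrow> ('a \<Rightarrow> 'a) \<Rightarrow> bool" where
  "C1_map_on S f \<longleftrightarrow> f ` S \<subseteq> S \<and>
     (\<exists>U g (g' :: 'a \<Rightarrow> ('a, 'a) blinfun). open U \<and> S \<subseteq> U \<and>
        (\<forall>x\<in>U. (g has_derivative blinfun_apply (g' x)) (at x)) \<and>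
        continuous_on U g' \<and> (\<forall>x\<in>S. g x = f x))"

end

theory Submission
  imports Defs
begin

text \<open>Since the basic eigenvalues diagonalise every f_*k, the induced maps of the iterates are
  diagonal as well, and L(f^m) = prod_i (1 + (-1)^(n_i) a_i^m). Quasi-unipotence forces a_i = +-1,
  so L(f^m) = 2p for odd m and 2q for even m, where p = 2^(l-1) if every (-1)^(n_i) a_i is 1 and
  p = 0 otherwise. Hence the zeta function is (1 - t)^(-(p+q)) (1 + t)^(p-q). If p is nonzero,
  the coefficient of t is L(f) = 2p, and a factor with r = 1 must occur in every representation;
  if p = 0, the zeta function is (1 - t^2)^(-q), which is either 1 or has representations with
  the disjoint period sets {1} and {2}.\<close>

section \<open>Rational coordinates in abelian groups\<close>

context comm_group
begin

definition int_comb :: "(nat \<Rightarrow> 'a) \<Rightarrow> nat \<Rightarrow> (nat \<Rightarrow> int) \<Rightarrow> 'a" where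
  "int_comb b r c = finprod G (\<lambda>i. b i [^] c i) {..<r}"

lemma finprod_lessThan_Suc:
  fixes r :: nat and f :: "nat \<Rightarrow> 'a"
  assumes "\<And>i. i < Suc r \<Longrightarrow> f i \<in> carrier G"
  shows "finprod G f {..<Suc r} = f r \<otimes> finprod G f {..<r}"
  using assms by (simp add: lessThan_Suc Pi_def)

lemma finprod_int_pow:
  fixes r :: nat and f :: "nat \<Rightarrow> 'a"
  assumes "\<And>i. i < r \<Longrightarrow> f i \<in> carrier G"
  shows "finprod G f {..<r} [^] (z::int) = finprod G (\<lambda>i. f i [^] z) {..<r}"
  using assms
proof (induction r)
  case (Suc r)
  then have "finprod G f {..<Suc r} [^] z = f r [^] z \<otimes> finprod G f {..<r} [^] z"
    by (simp add: finprod_lessThan_Suc int_pow_distrib finprod_closed Pi_def)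
  with Suc show ?case
    by (simp add: finprod_lessThan_Suc)
qed simp

lemma int_comb_closed: "b \<in> {..<r} \<rightarrow> carrier G \<Longrightarrow> int_comb b r c \<in> carrier G"
  unfolding int_comb_def by (intro finprod_closed) auto

lemma int_comb_add:
  assumes "b \<in> {..<r} \<rightarrow> carrier G"
  shows "int_comb b r (\<lambda>i. c i + d i) = int_comb b r c \<otimes> int_comb b r d"
proof -
  have "int_comb b r (\<lambda>i. c i + d i) = finprod G (\<lambda>i. b i [^] c i \<otimes> b i [^] d i) {..<r}"
    unfolding int_comb_def using assms by (intro finprod_cong) (auto simp: Pi_iff int_pow_mult)
  also have "\<dots> = int_comb b r c \<otimes> int_comb b r d"
    unfolding int_comb_def using assms by (intro finprod_multf) auto
  finally show ?thesis .
qed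

lemma int_comb_int_pow:
  assumes "b \<in> {..<r} \<rightarrow> carrier G"
  shows "int_comb b r c [^] (z::int) = int_comb b r (\<lambda>i. z * c i)"
proof -
  have "int_comb b r c [^] z = finprod G (\<lambda>i. (b i [^] c i) [^] z) {..<r}"
    unfolding int_comb_def using assms by (intro finprod_int_pow) auto
  also have "\<dots> = int_comb b r (\<lambda>i. z * c i)"
    unfolding int_comb_def using assms
    by (intro finprod_cong) (auto simp: Pi_iff int_pow_pow ac_simps)
  finally show ?thesis .
qed

lemma int_comb_nat_pow:
  assumes "b \<in> {..<r} \<rightarrow> carrier G"
  shows "int_comb b r c [^] (t::nat) = int_comb b r (\<lambda>i. int t * c i)"
  using int_comb_int_pow[OF assms, where c=c and z="int t"] by (simp add: int_pow_int)

lemma qbasis_closed: "qbasis G b r \<Longrightarrow> b \<in> {..<r} \<rightarrow> carrier G"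
  unfolding qbasis_def by auto

lemma int_comb_eq_imp_coeff_eq:
  assumes B: "qbasis G b r" and eq: "int_comb b r c = int_comb b r d" and i: "i < r"
  shows "c i = d i"
proof -
  have closed: "b \<in> {..<r} \<rightarrow> carrier G" using B by (rule qbasis_closed)
  have "int_comb b r (\<lambda>i. c i - d i) \<otimes> int_comb b r d = int_comb b r d"
    using int_comb_add[OF closed, of "\<lambda>i. c i - d i" d] eq by simp
  then have "\<exists>t::nat. t > 0 \<and> int_comb b r (\<lambda>i. c i - d i) [^] t = \<one>"
    using int_comb_closed[OF closed] by (intro exI[of _ 1]) simp
  moreover have "qindep G b r"
    using B by (simp add: qbasis_def)
  ultimately have "\<forall>i<r. c i - d i = 0"
    unfolding qindep_def int_comb_def by (blast dest: spec[of _ "\<lambda>i. c i - d i"])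
  with i show ?thesis by simp
qed

lemma qcoords_eq:
  assumes B: "qbasis G b r" and x: "x \<in> carrier G" and "t > 0"
    and t: "x [^] (t::nat) = int_comb b r c"
  shows "qcoords G b r x = (\<lambda>i. if i < r then of_int (c i) / of_nat t else 0)"
  unfolding qcoords_def
proof (rule the_equality)
  show "(\<forall>i\<ge>r. (\<lambda>i. if i < r then of_int (c i) / of_nat t else 0) i = 0) \<and>
    (\<exists>t' c'. 0 < t' \<and> x [^] t' = (\<Otimes>i\<in>{..<r}. b i [^] c' i) \<and>
       (\<forall>i<r. (\<lambda>i. if i < r then of_int (c i) / of_nat t else (0::rat)) i = of_int (c' i) / of_nat t'))"
    using \<open>t > 0\<close> t unfolding int_comb_def by auto
next
  fix q :: "nat \<Rightarrow> rat"
  assume q: "(\<forall>i\<ge>r. q i = 0) \<and> (\<exists>t' c'. 0 < t' \<and> x [^] t' = (\<Otimes>i\<in>{..<r}. b i [^] c' i) \<and>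
       (\<forall>i<r. q i = of_int (c' i) / of_nat t'))"
  then obtain t' c' where "t' > 0" and t': "x [^] (t'::nat) = int_comb b r c'"
    and q_lt: "\<forall>i<r. q i = of_int (c' i) / of_nat t'" unfolding int_comb_def by blast
  have closed: "b \<in> {..<r} \<rightarrow> carrier G" using B by (rule qbasis_closed)
  have cross: "c i * int t' = c' i * int t" if "i < r" for i
  proof -
    have "int_comb b r (\<lambda>i. int t' * c i) = x [^] (t * t')"
      using t by (simp add: nat_pow_pow[OF x, symmetric] int_comb_nat_pow[OF closed])
    also have "\<dots> = int_comb b r (\<lambda>i. int t * c' i)"
      using t' by (simp add: mult.commute[of t] nat_pow_pow[OF x, symmetric] int_comb_nat_pow[OF closed])
    finally show ?thesis
      using int_comb_eq_imp_coeff_eq[OF B _ that] by (simp add: mult.commute)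
  qed
  show "q = (\<lambda>i. if i < r then of_int (c i) / of_nat t else 0)"
  proof
    fix i
    show "q i = (if i < r then of_int (c i) / of_nat t else 0)"
    proof (cases "i < r")
      case True
      then have "(of_int (c i) :: rat) * of_nat t' = of_int (c' i) * of_nat t"
        using cross by (metis of_int_mult of_int_of_nat_eq)
      with True q_lt \<open>t > 0\<close> \<open>t' > 0\<close> show ?thesis
        by (simp add: frac_eq_eq)
    qed (use q in simp)
  qed
qed

lemma qcoords_obtain:
  assumes B: "qbasis G b r" and x: "x \<in> carrier G"
  obtains t c where "t > 0" "x [^] (t::nat) = int_comb b r c"
    "qcoords G b r x = (\<lambda>i. if i < r then of_int (c i) / of_nat t else 0)"
  using assms qcoords_eq[OF B x] unfolding qbasis_def qspan_def int_comb_def by blast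

lemma qcoords_mult:
  assumes B: "qbasis G b r" and x: "x \<in> carrier G" and y: "y \<in> carrier G"
  shows "qcoords G b r (x \<otimes> y) i = qcoords G b r x i + qcoords G b r y i"
proof -
  have closed: "b \<in> {..<r} \<rightarrow> carrier G" using B by (rule qbasis_closed)
  obtain t c where "t > 0" and t: "x [^] (t::nat) = int_comb b r c"
    and cx: "qcoords G b r x = (\<lambda>i. if i < r then of_int (c i) / of_nat t else 0)"
    using qcoords_obtain[OF B x] .
  obtain s d where "s > 0" and s: "y [^] (s::nat) = int_comb b r d"
    and cy: "qcoords G b r y = (\<lambda>i. if i < r then of_int (d i) / of_nat s else 0)"
    using qcoords_obtain[OF B y] .
  have "x [^] (t * s) = int_comb b r (\<lambda>i. int s * c i)"
    using t by (simp add: nat_pow_pow[OF x, symmetric] int_comb_nat_pow[OF closed])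
  moreover have "y [^] (t * s) = int_comb b r (\<lambda>i. int t * d i)"
    using s by (simp add: mult.commute[of t] nat_pow_pow[OF y, symmetric] int_comb_nat_pow[OF closed])
  ultimately have "(x \<otimes> y) [^] (t * s) = int_comb b r (\<lambda>i. int s * c i) \<otimes> int_comb b r (\<lambda>i. int t * d i)"
    using x y by (simp add: nat_pow_distrib)
  also have "\<dots> = int_comb b r (\<lambda>i. int s * c i + int t * d i)"
    by (rule int_comb_add[OF closed, symmetric])
  finally have "qcoords G b r (x \<otimes> y)
      = (\<lambda>i. if i < r then of_int (int s * c i + int t * d i) / of_nat (t * s) else 0)"
    using qcoords_eq[OF B] x y \<open>t > 0\<close> \<open>s > 0\<close> by simp
  with cx cy \<open>t > 0\<close> \<open>s > 0\<close> show ?thesis by (simp add: field_simps)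
qed

lemma qcoords_int_pow:
  assumes B: "qbasis G b r" and x: "x \<in> carrier G"
  shows "qcoords G b r (x [^] (z::int)) i = of_int z * qcoords G b r x i"
proof -
  have closed: "b \<in> {..<r} \<rightarrow> carrier G" using B by (rule qbasis_closed)
  obtain t c where "t > 0" and t: "x [^] (t::nat) = int_comb b r c"
    and cx: "qcoords G b r x = (\<lambda>i. if i < r then of_int (c i) / of_nat t else 0)"
    using qcoords_obtain[OF B x] .
  have "(x [^] z) [^] t = (x [^] t) [^] z"
    using x by (simp add: int_pow_int[symmetric] int_pow_pow mult.commute)
  also have "\<dots> = int_comb b r (\<lambda>i. z * c i)"
    using t int_comb_int_pow[OF closed] by simp
  finally have "qcoords G b r (x [^] z) = (\<lambda>i. if i < r then of_int (z * c i) / of_nat t else 0)"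
    using qcoords_eq[OF B _ \<open>t > 0\<close>] x by simp
  with cx show ?thesis by simp
qed

lemma qcoords_one: "qbasis G b r \<Longrightarrow> qcoords G b r \<one> i = 0"
  using qcoords_int_pow[of b r \<one> 0] by simp

lemma qcoords_finprod:
  fixes y :: "nat \<Rightarrow> 'a" and s :: nat
  assumes B: "qbasis G b r" and y: "\<And>j. j < s \<Longrightarrow> y j \<in> carrier G"
  shows "qcoords G b r (finprod G (\<lambda>j. y j [^] e j) {..<s}) i
     = (\<Sum>j<s. of_int (e j) * qcoords G b r (y j) i)"
  using y
proof (induction s)
  case (Suc s)
  then show ?case
    by (simp add: finprod_lessThan_Suc qcoords_mult[OF B] qcoords_int_pow[OF B]
        finprod_closed Pi_def)
qed (simp add: qcoords_one[OF B])

lemma qcoords_basis_vector: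
  assumes B: "qbasis G b r" and j: "j < r"
  shows "qcoords G b r (b j) = (\<lambda>i. if i = j then 1 else 0)"
proof -
  have closed: "b \<in> {..<r} \<rightarrow> carrier G" using B by (rule qbasis_closed)
  then have bj: "b j \<in> carrier G" using j by blast
  have "int_comb b r (\<lambda>i. if i = j then 1 else 0) = finprod G (\<lambda>i. if j = i then b i else \<one>) {..<r}"
    unfolding int_comb_def using closed by (intro finprod_cong) (auto simp: Pi_iff simp_implies_def)
  also have "\<dots> = b j" using j closed by (intro finprod_singleton) auto
  finally have "b j [^] (1::nat) = int_comb b r (\<lambda>i. if i = j then 1 else 0)"
    using bj by simp
  from qcoords_eq[OF B bj zero_less_one this] j show ?thesis by auto
qed

lemma hom_int_comb:
  assumes h: "h \<in> hom G G" and closed: "b \<in> {..<r} \<rightarrow> carrier G"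
  shows "h (int_comb b r c) = int_comb (\<lambda>i. h (b i)) r c"
proof -
  interpret group_hom G G h
    using h by (simp add: group_hom_def group_hom_axioms_def is_group)
  show ?thesis
    using closed
  proof (induction r)
    case (Suc r)
    then have "b \<in> {..<r} \<rightarrow> carrier G" by auto
    have "h (int_comb b (Suc r) c) = h (b r [^] c r) \<otimes> h (int_comb b r c)"
      using Suc.prems int_comb_closed[of b r c]
      by (simp add: int_comb_def finprod_lessThan_Suc Pi_def)
    also have "\<dots> = int_comb (\<lambda>i. h (b i)) (Suc r) c"
      using Suc by (simp add: int_comb_def finprod_lessThan_Suc Pi_def hom_int_pow)
    finally show ?case .
  qed (simp add: int_comb_def)
qed

lemma qcoords_hom:
  assumes B: "qbasis G b r" and B': "qbasis G b' r'" and h: "h \<in> hom G G"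
    and x: "x \<in> carrier G"
  shows "qcoords G b r (h x) i = (\<Sum>j<r'. qcoords G b' r' x j * qcoords G b r (h (b' j)) i)"
proof -
  have closed': "b' \<in> {..<r'} \<rightarrow> carrier G" using B' by (rule qbasis_closed)
  interpret group_hom G G h
    using h by (simp add: group_hom_def group_hom_axioms_def is_group)
  obtain t c where "t > 0" and t: "x [^] (t::nat) = int_comb b' r' c"
    and cx: "qcoords G b' r' x = (\<lambda>i. if i < r' then of_int (c i) / of_nat t else 0)"
    using qcoords_obtain[OF B' x] .
  have "of_int (int t) * qcoords G b r (h x) i = qcoords G b r (h x [^] int t) i"
    using x by (simp add: qcoords_int_pow[OF B])
  also have "h x [^] int t = int_comb (\<lambda>i. h (b' i)) r' c"
    using t hom_int_comb[OF h closed'] by (simp add: int_pow_int hom_nat_pow[OF x, symmetric])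
  also have "qcoords G b r \<dots> i = (\<Sum>j<r'. of_int (c j) * qcoords G b r (h (b' j)) i)"
    unfolding int_comb_def using closed' by (intro qcoords_finprod[OF B]) (auto intro: hom_closed)
  finally have "qcoords G b r (h x) i = (\<Sum>j<r'. of_int (c j) * qcoords G b r (h (b' j)) i) / of_nat t"
    using \<open>t > 0\<close> by (simp add: field_simps)
  also have "\<dots> = (\<Sum>j<r'. qcoords G b' r' x j * qcoords G b r (h (b' j)) i)"
    unfolding sum_divide_distrib using cx by (intro sum.cong) auto
  finally show ?thesis .
qed

lemma qcoords_change_basis:
  assumes "qbasis G b r" "qbasis G b' r'" "x \<in> carrier G"
  shows "qcoords G b r x i = (\<Sum>j<r'. qcoords G b' r' x j * qcoords G b r (b' j) i)"
  using qcoords_hom[OF assms(1,2) _ assms(3), of "\<lambda>x. x"] by (simp add: hom_def)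

lemma qcoords_transition_inverse:
  assumes B: "qbasis G b r" and B': "qbasis G b' r'" and k: "k < r" and i: "i < r"
  shows "(\<Sum>j<r'. qcoords G b' r' (b k) j * qcoords G b r (b' j) i) = (if i = k then 1 else 0)"
proof -
  have "b k \<in> carrier G" using qbasis_closed[OF B] k by blast
  from qcoords_change_basis[OF B B' this, of i] show ?thesis
    using qcoords_basis_vector[OF B k] by simp
qed

lemma qbasis_length_unique:
  assumes B: "qbasis G b r" and B': "qbasis G b' r'"
  shows "r = r'"
proof -
  have "of_nat r = (\<Sum>k<r. \<Sum>j<r'. qcoords G b' r' (b k) j * qcoords G b r (b' j) k)"
    by (simp add: qcoords_transition_inverse[OF B B'])
  also have "\<dots> = (\<Sum>j<r'. \<Sum>k<r. qcoords G b r (b' j) k * qcoords G b' r' (b k) j)"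
    by (subst sum.swap) (simp add: mult.commute)
  also have "\<dots> = of_nat r'"
    by (simp add: qcoords_transition_inverse[OF B' B])
  finally show ?thesis by simp
qed

lemma qtrace_basis_invariant:
  assumes B: "qbasis G b r" and B': "qbasis G b' r'" and h: "h \<in> hom G G"
  shows "(\<Sum>j<r'. qcoords G b' r' (h (b' j)) j) = (\<Sum>m<r. qcoords G b r (h (b m)) m)"
proof -
  let ?P = "\<lambda>m j. qcoords G b' r' (b m) j" and ?Q = "\<lambda>j k. qcoords G b r (b' j) k"
    and ?A = "\<lambda>k m. qcoords G b r (h (b k)) m"
  have closed': "b' j \<in> carrier G" if "j < r'" for j using qbasis_closed[OF B'] that by blast
  have h_closed: "h y \<in> carrier G" if "y \<in> carrier G" for y using h that by (auto simp: hom_def)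
  have "(\<Sum>j<r'. qcoords G b' r' (h (b' j)) j) = (\<Sum>j<r'. \<Sum>m<r. (\<Sum>k<r. ?Q j k * ?A k m) * ?P m j)"
    using qcoords_change_basis[OF B' B h_closed[OF closed']] qcoords_hom[OF B B h closed']
    by simp
  also have "\<dots> = (\<Sum>j<r'. \<Sum>m<r. \<Sum>k<r. ?A k m * (?P m j * ?Q j k))"
    by (simp add: sum_distrib_left sum_distrib_right ac_simps)
  also have "\<dots> = (\<Sum>m<r. \<Sum>k<r. \<Sum>j<r'. ?A k m * (?P m j * ?Q j k))"
    by (subst sum.swap) (simp only: sum.swap[of _ "{..<r}" "{..<r'}"])
  also have "\<dots> = (\<Sum>m<r. \<Sum>k<r. ?A k m * (\<Sum>j<r'. ?P m j * ?Q j k))"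
    by (simp add: sum_distrib_left)
  also have "\<dots> = (\<Sum>m<r. ?A m m)"
    by (simp add: qcoords_transition_inverse[OF B B'] if_distrib cong: if_cong)
  finally show ?thesis .
qed

lemma qcoords_diagonal_comp:
  assumes B: "qbasis G b r" and h: "h \<in> hom G G" and g: "g \<in> hom G G"
    and dg: "\<And>i j. i < r \<Longrightarrow> j < r \<Longrightarrow> qcoords G b r (g (b j)) i = (if i = j then d j else 0)"
    and dh: "\<And>i j. i < r \<Longrightarrow> j < r \<Longrightarrow> qcoords G b r (h (b j)) i = (if i = j then e j else 0)"
    and i: "i < r" and j: "j < r"
  shows "qcoords G b r (h (g (b j))) i = (if i = j then d j * e j else 0)"
proof -
  have "g (b j) \<in> carrier G" using g qbasis_closed[OF B] j by (auto simp: hom_def)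
  then have "qcoords G b r (h (g (b j))) i = (\<Sum>k<r. qcoords G b r (g (b j)) k * qcoords G b r (h (b k)) i)"
    by (rule qcoords_hom[OF B B h])
  also have "\<dots> = (\<Sum>k<r. if k = j then d j * qcoords G b r (h (b k)) i else 0)"
    using dg j by (intro sum.cong) auto
  also have "\<dots> = d j * qcoords G b r (h (b j)) i"
    using j by simp
  finally show ?thesis using dh[OF i j] by simp
qed

lemma qcoords_diagonal_eigenvector:
  assumes B: "qbasis G b r" and B': "qbasis G b' r'" and h: "h \<in> hom G G"
    and dh: "\<And>i j. i < r \<Longrightarrow> j < r \<Longrightarrow> qcoords G b r (h (b j)) i = (if i = j then d j else 0)"
    and k: "k < r"
  shows "(\<Sum>j<r'. qcoords G b' r' (h (b' j)) i * qcoords G b' r' (b k) j) = d k * qcoords G b' r' (b k) i"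
proof -
  have bk: "b k \<in> carrier G" using qbasis_closed[OF B] k by blast
  then have "h (b k) \<in> carrier G" using h by (auto simp: hom_def)
  have "(\<Sum>j<r'. qcoords G b' r' (h (b' j)) i * qcoords G b' r' (b k) j) = qcoords G b' r' (h (b k)) i"
    using qcoords_hom[OF B' B' h bk, of i] by (simp add: mult.commute)
  also have "\<dots> = (\<Sum>m<r. qcoords G b r (h (b k)) m * qcoords G b' r' (b m) i)"
    using qcoords_change_basis[OF B' B \<open>h (b k) \<in> carrier G\<close>, of i] by simp
  also have "\<dots> = (\<Sum>m<r. if m = k then d k * qcoords G b' r' (b m) i else 0)"
    using dh k by (intro sum.cong) auto
  also have "\<dots> = d k * qcoords G b' r' (b k) i"
    using k by simp
  finally show ?thesis .
qed

lemma qcoords_basis_vector_nonzero: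
  assumes B: "qbasis G b r" and B': "qbasis G b' r'" and k: "k < r"
  shows "\<exists>i<r'. qcoords G b' r' (b k) i \<noteq> 0"
proof (rule ccontr)
  assume "\<not> ?thesis"
  then have "(\<Sum>j<r'. qcoords G b' r' (b k) j * qcoords G b r (b' j) k) = 0" by simp
  with qcoords_transition_inverse[OF B B' k k] show False by simp
qed

end

lemma qbasis_qbas:
  assumes "qbasis G b r"
  shows "qbasis G (qbas G) (qrank G)"
proof -
  have "\<exists>r b. qbasis G b r" using assms by blast
  then have "\<exists>b. qbasis G b (qrank G)"
    unfolding qrank_def by (rule someI_ex)
  then show ?thesis
    unfolding qbas_def by (rule someI_ex)
qed

lemma qrank_eq:
  assumes "comm_group G" "qbasis G b r"
  shows "qrank G = r"
  using comm_group.qbasis_length_unique[OF assms(1) qbasis_qbas[OF assms(2)] assms(2)] .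

lemma qtrace_eq:
  assumes "comm_group G" "qbasis G b r" "h \<in> hom G G"
  shows "qtrace G h = (\<Sum>j<r. qcoords G b r (h (b j)) j)"
  unfolding qtrace_def qmatrix_def
  using comm_group.qtrace_basis_invariant[OF assms(1,2) qbasis_qbas[OF assms(2)] assms(3)] .

lemma qeigenvalue_diagonal_entry:
  assumes G: "comm_group G" and B: "qbasis G b r" and h: "h \<in> hom G G"
    and dh: "\<And>i j. i < r \<Longrightarrow> j < r \<Longrightarrow> qmatrix G b r h i j = (if i = j then d j else 0)"
    and k: "k < r"
  shows "qeigenvalue G h (of_rat (d k))"
proof -
  define v where "v i = qcoords G (qbas G) (qrank G) (b k) i" for i
  have B': "qbasis G (qbas G) (qrank G)" using B by (rule qbasis_qbas)
  have "\<exists>i<qrank G. (of_rat (v i) :: complex) \<noteq> 0"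
    using comm_group.qcoords_basis_vector_nonzero[OF G B B' k] unfolding v_def by simp
  moreover have "(\<Sum>j<qrank G. of_rat (qmatrix G (qbas G) (qrank G) h i j) * (of_rat (v j) :: complex))
      = of_rat (d k) * of_rat (v i)" for i
  proof -
    have "(\<Sum>j<qrank G. qmatrix G (qbas G) (qrank G) h i j * v j) = d k * v i"
      using comm_group.qcoords_diagonal_eigenvector[OF G B B' h _ k, of d i] dh
      unfolding qmatrix_def v_def by simp
    then have "of_rat (\<Sum>j<qrank G. qmatrix G (qbas G) (qrank G) h i j * v j) = (of_rat (d k * v i) :: complex)"
      by (rule arg_cong)
    then show ?thesis
      by (simp add: of_rat_sum of_rat_mult)
  qed
  ultimately show ?thesis
    unfolding qeigenvalue_def by (intro exI[of _ "\<lambda>i. of_rat (v i)"]) simp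
qed

section \<open>Homology of the iterates\<close>

lemma continuous_map_C1_map_on:
  assumes "C1_map_on S f"
  shows "continuous_map (top_of_set S) (top_of_set S) f"
proof -
  obtain U g g' where "open U" "S \<subseteq> U" and g': "\<forall>x\<in>U. (g has_derivative blinfun_apply (g' x)) (at x)"
    and "\<forall>x\<in>S. g x = f x" and "f ` S \<subseteq> S"
    using assms unfolding C1_map_on_def by blast
  have "continuous_on U g"
    using g' by (intro has_derivative_continuous_on) (auto intro: has_derivative_at_withinI)
  then have "continuous_on S f"
    using \<open>S \<subseteq> U\<close> \<open>\<forall>x\<in>S. g x = f x\<close> continuous_on_subset continuous_on_eq by blast
  with \<open>f ` S \<subseteq> S\<close> show ?thesis by auto
qed

lemma continuous_map_funpow:
  assumes "continuous_map X X f"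
  shows "continuous_map X X (f ^^ m)"
proof (induction m)
  case (Suc m)
  then show ?case
    using continuous_map_compose[OF Suc assms] by (simp add: comp_def)
qed (simp add: continuous_map_id[unfolded id_def])

lemma hom_induced_funpow_diagonal:
  assumes f: "continuous_map X X f" and B: "qbasis (homology_group k X) b r"
    and d: "\<And>i j. i < r \<Longrightarrow> j < r \<Longrightarrow>
      qcoords (homology_group k X) b r (fstar k X f (b j)) i = (if i = j then d j else 0)"
    and "i < r" "j < r"
  shows "qcoords (homology_group k X) b r (fstar k X (f ^^ m) (b j)) i = (if i = j then d j ^ m else 0)"
  using \<open>i < r\<close> \<open>j < r\<close>
proof (induction m arbitrary: i j)
  case 0
  have "b j \<in> carrier (homology_group k X)"
    using comm_group.qbasis_closed[OF abelian_homology_group B] 0 by blast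
  then show ?case
    using comm_group.qcoords_basis_vector[OF abelian_homology_group B \<open>j < r\<close>]
    by (simp add: hom_induced_id[unfolded id_def])
next
  case (Suc m)
  have "fstar k X (f ^^ Suc m) = fstar k X (f \<circ> f ^^ m)"
    by simp
  also have "\<dots> = fstar k X f \<circ> fstar k X (f ^^ m)"
    by (rule hom_induced_compose) (use f continuous_map_funpow[OF f] in auto)
  finally have step: "fstar k X (f ^^ Suc m) (b j) = fstar k X f (fstar k X (f ^^ m) (b j))"
    by simp
  show ?case
    unfolding step using comm_group.qcoords_diagonal_comp[OF abelian_homology_group B hom_induced_hom hom_induced_hom
        Suc.IH d Suc.prems] by (simp add: mult.commute)
qed

definition degree_subsets :: "nat \<Rightarrow> (nat \<Rightarrow> nat) \<Rightarrow> nat \<Rightarrow> nat set set" where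
  "degree_subsets l n k = {S. S \<subseteq> {..<l} \<and> (\<Sum>i\<in>S. n i) = k}"

lemma finite_degree_subsets: "finite (degree_subsets l n k)"
  unfolding degree_subsets_def by (rule finite_subset[of _ "Pow {..<l}"]) auto

lemma basic_eigenvalues_degree:
  assumes "basic_eigenvalues X f l n a"
  shows "\<exists>b r (d :: nat \<Rightarrow> rat). qbasis (homology_group (int k) X) b r \<and>
    (\<forall>i<r. \<forall>j<r. qmatrix (homology_group (int k) X) b r (fstar (int k) X f) i j
      = (if i = j then d j else 0)) \<and>
    mset (map d [0..<r]) = image_mset (\<lambda>S. of_int (\<Prod>i\<in>S. a i)) (mset_set (degree_subsets l n k))"
  using assms unfolding basic_eigenvalues_def degree_subsets_def by (rule spec)

lemma qrank_homology_basic_eigenvalues: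
  assumes "basic_eigenvalues X f l n a"
  shows "qrank (homology_group (int k) X) = card (degree_subsets l n k)"
proof -
  obtain b r and d :: "nat \<Rightarrow> rat" where B: "qbasis (homology_group (int k) X) b r"
    and ms: "mset (map d [0..<r]) = image_mset (\<lambda>S. of_int (\<Prod>i\<in>S. a i)) (mset_set (degree_subsets l n k))"
    using basic_eigenvalues_degree[OF assms, of k] by blast
  have "r = card (degree_subsets l n k)"
    using arg_cong[OF ms, of size] by simp
  with qrank_eq[OF abelian_homology_group B] show ?thesis by simp
qed

lemma qtrace_homology_funpow:
  assumes f: "continuous_map X X f" and BE: "basic_eigenvalues X f l n a"
  shows "qtrace (homology_group (int k) X) (fstar (int k) X (f ^^ m))
    = (\<Sum>S\<in>degree_subsets l n k. of_int (\<Prod>i\<in>S. a i) ^ m)"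
proof -
  obtain b r and d :: "nat \<Rightarrow> rat" where B: "qbasis (homology_group (int k) X) b r"
    and dg: "\<forall>i<r. \<forall>j<r.
      qmatrix (homology_group (int k) X) b r (fstar (int k) X f) i j = (if i = j then d j else 0)"
    and ms: "mset (map d [0..<r]) = image_mset (\<lambda>S. of_int (\<Prod>i\<in>S. a i)) (mset_set (degree_subsets l n k))"
    using basic_eigenvalues_degree[OF BE, of k] by blast
  have "qtrace (homology_group (int k) X) (fstar (int k) X (f ^^ m)) = (\<Sum>j<r. d j ^ m)"
    using qtrace_eq[OF abelian_homology_group B hom_induced_hom]
      hom_induced_funpow_diagonal[OF f B, of d] dg unfolding qmatrix_def by simp
  also have "\<dots> = sum_list (map (\<lambda>x. x ^ m) (map d [0..<r]))"
    by (simp add: sum_set_upt_conv_sum_list_nat[symmetric] atLeast0LessThan)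
  also have "\<dots> = sum_mset (image_mset (\<lambda>x. x ^ m) (mset (map d [0..<r])))"
    by (metis mset_map sum_mset_sum_list)
  also have "\<dots> = (\<Sum>S\<in>degree_subsets l n k. of_int (\<Prod>i\<in>S. a i) ^ m)"
    unfolding ms by (simp add: sum_unfold_sum_mset multiset.map_comp comp_def)
  finally show ?thesis .
qed

lemma int_root_of_unity:
  assumes "(of_int z :: complex) ^ m = 1" "m > 0"
  shows "z = 1 \<or> z = -1"
proof -
  have "norm (of_int z :: complex) = 1"
    using assms power_eq_1_iff by blast
  then have "\<bar>z\<bar> = 1"
    by (metis norm_of_int of_int_eq_1_iff of_int_abs)
  then show ?thesis by arith
qed

lemma basic_eigenvalue_unit:
  assumes BE: "basic_eigenvalues X f l n a" and QU: "quasi_unipotent X f" and "i < l"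
  shows "a i = 1 \<or> a i = -1"
proof -
  let ?G = "homology_group (int (n i)) X" and ?h = "fstar (int (n i)) X f"
  obtain b r and d :: "nat \<Rightarrow> rat" where B: "qbasis ?G b r"
    and dg: "\<forall>p<r. \<forall>q<r. qmatrix ?G b r ?h p q = (if p = q then d q else 0)"
    and ms: "mset (map d [0..<r]) = image_mset (\<lambda>S. of_int (\<Prod>i\<in>S. a i)) (mset_set (degree_subsets l n (n i)))"
    using basic_eigenvalues_degree[OF BE, of "n i"] by blast
  have "{i} \<in> degree_subsets l n (n i)"
    using \<open>i < l\<close> unfolding degree_subsets_def by auto
  then have "of_int (a i) \<in># mset (map d [0..<r])"
    unfolding ms using finite_degree_subsets by (auto intro!: image_eqI[of _ _ "{i}"])
  then obtain j where "j < r" and dj: "d j = of_int (a i)"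
    by auto
  have "qeigenvalue ?G ?h (of_rat (d j))"
    using qeigenvalue_diagonal_entry[OF abelian_homology_group B hom_induced_hom _ \<open>j < r\<close>] dg
    by blast
  then obtain m :: nat where "m > 0" "(of_rat (d j) :: complex) ^ m = 1"
    using QU unfolding quasi_unipotent_def by blast
  with dj show ?thesis
    using int_root_of_unity by simp
qed

lemma lefschetz_number_funpow:
  assumes f: "continuous_map X X f" and BE: "basic_eigenvalues X f l n a"
  shows "lefschetz_number X (f ^^ m) = (\<Prod>i<l. 1 + (-1) ^ n i * of_int (a i) ^ m)"
proof -
  define F :: "nat set \<Rightarrow> rat" where "F S = (-1) ^ (\<Sum>i\<in>S. n i) * of_int (\<Prod>i\<in>S. a i) ^ m" for S
  define K where "K = {k. card (degree_subsets l n k) \<noteq> 0}"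
  have K: "K = (\<lambda>S. \<Sum>i\<in>S. n i) ` Pow {..<l}"
    using finite_degree_subsets unfolding K_def degree_subsets_def by auto
  have "lefschetz_number X (f ^^ m) = (\<Sum>k\<in>K. \<Sum>S\<in>degree_subsets l n k. F S)"
    unfolding lefschetz_number_def K_def F_def degree_subsets_def
    by (simp add: qrank_homology_basic_eigenvalues[OF BE] qtrace_homology_funpow[OF f BE]
        sum_distrib_left degree_subsets_def)
  also have "\<dots> = (\<Sum>k\<in>K. \<Sum>S\<in>{S \<in> Pow {..<l}. (\<Sum>i\<in>S. n i) = k}. F S)"
    unfolding degree_subsets_def by simp
  also have "\<dots> = (\<Sum>S\<in>Pow {..<l}. F S)"
    by (rule sum.group) (auto simp: K)
  also have "\<dots> = (\<Sum>S\<in>Pow {..<l}. (\<Prod>i\<in>S. (-1) ^ n i * of_int (a i) ^ m) * (\<Prod>i\<in>{..<l} - S. 1))"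
    unfolding F_def by (intro sum.cong refl) (simp add: prod.distrib power_sum prod_power_distrib)
  also have "\<dots> = (\<Prod>i<l. (-1) ^ n i * of_int (a i) ^ m + 1)"
    by (rule prod_add[symmetric]) simp
  finally show ?thesis by (simp add: add.commute)
qed

lemma lefschetz_number_funpow_unit:
  assumes f: "continuous_map X X f" and BE: "basic_eigenvalues X f l n a"
    and unit: "\<And>i. i < l \<Longrightarrow> a i = 1 \<or> a i = -1"
  shows "lefschetz_number X (f ^^ m) = of_int (\<Prod>i<l. 1 + (-1) ^ n i * (if odd m then a i else 1))"
proof -
  have "1 + (-1) ^ n i * of_int (a i) ^ m = (of_int (1 + (-1) ^ n i * (if odd m then a i else 1)) :: rat)"
    if "i < l" for i
    using unit[OF that] by (auto simp: minus_one_power_iff)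
  then show ?thesis
    unfolding lefschetz_number_funpow[OF f BE] of_int_prod by (intro prod.cong) auto
qed

section \<open>Exponentials of formal power series\<close>

lemma fps_exp_compose_unique:
  fixes g Z :: "'a::field_char_0 fps"
  assumes g0: "fps_nth g 0 = 0" and Z0: "fps_nth Z 0 = 1" and Z': "fps_deriv Z = Z * fps_deriv g"
  shows "fps_exp 1 oo g = Z"
proof -
  define H where "H = (fps_exp 1 oo g) * inverse Z"
  have ZZ: "Z * inverse Z = 1" using Z0 by (simp add: inverse_mult_eq_1')
  have E': "fps_deriv (fps_exp 1 oo g) = (fps_exp 1 oo g) * fps_deriv g"
    using g0 by (simp add: fps_compose_deriv)
  have "fps_deriv H = (fps_exp 1 oo g) * fps_deriv g * inverse Z * (1 - Z * inverse Z)"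
    unfolding H_def using Z0 by (simp add: E' Z' fps_inverse_deriv power2_eq_square algebra_simps)
  then have "H = fps_const (fps_nth H 0)"
    using ZZ by (simp add: fps_deriv_eq_0_iff)
  moreover have "fps_nth H 0 = 1" unfolding H_def using Z0 g0 by simp
  ultimately have "(fps_exp 1 oo g) * (inverse Z * Z) = Z"
    unfolding H_def by (simp add: mult.assoc)
  then show ?thesis using ZZ by (simp add: mult.commute)
qed

lemma fps_exp_compose_add:
  fixes u v :: "'a::field_char_0 fps"
  assumes "fps_nth u 0 = 0" "fps_nth v 0 = 0"
  shows "fps_exp 1 oo (u + v) = (fps_exp 1 oo u) * (fps_exp 1 oo v)"
  using assms by (intro fps_exp_compose_unique) (simp_all add: fps_compose_deriv algebra_simps)

lemma fps_exp_compose_uminus: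
  fixes u :: "'a::field_char_0 fps"
  assumes "fps_nth u 0 = 0"
  shows "fps_exp 1 oo - u = inverse (fps_exp 1 oo u)"
proof -
  have "(fps_exp 1 oo u) * (fps_exp 1 oo - u) = 1"
    using fps_exp_compose_add[of u "- u"] assms by simp
  then show ?thesis
    by (rule fps_inverse_unique[symmetric])
qed

lemma fps_exp_compose_of_nat_mult:
  fixes u :: "'a::field_char_0 fps"
  assumes "fps_nth u 0 = 0"
  shows "fps_exp 1 oo (of_nat k * u) = (fps_exp 1 oo u) ^ k"
proof (induction k)
  case (Suc k)
  have "fps_exp 1 oo (of_nat (Suc k) * u) = fps_exp 1 oo (u + of_nat k * u)"
    by (simp add: algebra_simps)
  with Suc assms show ?case
    by (simp add: fps_exp_compose_add)
qed simp

lemma fps_exp_compose_of_int_mult: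
  fixes u :: "'a::field_char_0 fps"
  assumes "fps_nth u 0 = 0"
  shows "fps_exp 1 oo (of_int k * u) = (fps_exp 1 oo u) powi k"
proof (cases "k \<ge> 0")
  case True
  then show ?thesis
    using fps_exp_compose_of_nat_mult[OF assms, of "nat k"] by (simp add: power_int_def)
next
  case False
  have "fps_exp 1 oo (of_int k * u) = fps_exp 1 oo - (of_nat (nat (- k)) * u)"
    using False by simp
  also have "\<dots> = inverse ((fps_exp 1 oo u) ^ nat (- k))"
    using assms by (simp add: fps_exp_compose_uminus fps_exp_compose_of_nat_mult)
  finally show ?thesis
    using False by (simp add: power_int_def fps_inverse_power)
qed

definition neg_log_series :: "'a::field_char_0 \<Rightarrow> 'a fps" where
  "neg_log_series c = Abs_fps (\<lambda>m. if m = 0 then 0 else c ^ m / of_nat m)"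

lemma fps_geometric_series:
  fixes c :: "'a::field"
  shows "(1 - fps_const c * fps_X) * Abs_fps (\<lambda>n. c ^ n) = 1"
proof (rule fps_ext)
  fix n
  show "fps_nth ((1 - fps_const c * fps_X) * Abs_fps (\<lambda>n. c ^ n)) n = fps_nth 1 n"
    by (cases n) (simp_all add: algebra_simps fps_X_mult_nth)
qed

lemma fps_exp_compose_neg_log_series:
  "fps_exp 1 oo neg_log_series c = inverse (1 - fps_const c * fps_X)"
proof (rule fps_exp_compose_unique)
  let ?Z = "inverse (1 - fps_const c * fps_X)"
  have Z: "?Z = Abs_fps (\<lambda>n. c ^ n)"
    by (rule fps_inverse_unique[OF fps_geometric_series])
  have "fps_deriv (neg_log_series c) = fps_const c * Abs_fps (\<lambda>n. c ^ n)"
    by (rule fps_ext) (simp add: neg_log_series_def del: of_nat_Suc)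
  then show "fps_deriv ?Z = ?Z * fps_deriv (neg_log_series c)"
    by (simp add: fps_inverse_deriv power2_eq_square Z[symmetric] algebra_simps)
qed (simp_all add: neg_log_series_def)

lemma fps_inverse_power_int:
  fixes F :: "'a::field fps"
  assumes "fps_nth F 0 \<noteq> 0"
  shows "inverse F powi k = F powi (- k)"
  using assms by (auto simp: power_int_def)

lemma lefschetz_zeta_two_periodic:
  assumes L: "\<forall>m>0. lefschetz_number X (f ^^ m) = (if odd m then 2 * of_int p else 2 * of_int q)"
  shows "lefschetz_zeta X f = (1 - fps_X) powi (- (p + q)) * (1 + fps_X) powi (p - q)"
proof -
  have log: "Abs_fps (\<lambda>m. if m = 0 then 0 else lefschetz_number X (f ^^ m) / of_nat m)
      = of_int (p + q) * neg_log_series 1 + of_int (q - p) * neg_log_series (- 1)"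
  proof (rule fps_ext)
    fix m :: nat
    show "fps_nth (Abs_fps (\<lambda>m. if m = 0 then 0 else lefschetz_number X (f ^^ m) / of_nat m)) m
      = fps_nth (of_int (p + q) * neg_log_series 1 + of_int (q - p) * neg_log_series (- 1)) m"
      using L by (cases "odd m") (auto simp: neg_log_series_def field_simps simp flip: fps_of_int)
  qed
  have nl0: "fps_nth (neg_log_series c) 0 = 0" for c :: rat
    by (simp add: neg_log_series_def)
  have "lefschetz_zeta X f = (fps_exp 1 oo of_int (p + q) * neg_log_series 1)
      * (fps_exp 1 oo of_int (q - p) * neg_log_series (- 1))"
    unfolding lefschetz_zeta_def log
    by (rule fps_exp_compose_add) (simp_all add: nl0 flip: fps_of_int)
  also have "\<dots> = inverse (1 - fps_X) powi (p + q) * inverse (1 + fps_X) powi (q - p)"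
    unfolding fps_exp_compose_of_int_mult[OF nl0] fps_exp_compose_neg_log_series
    by (simp flip: fps_const_neg)
  finally show ?thesis
    by (simp add: fps_inverse_power_int)
qed

section \<open>Representations of the zeta function\<close>

lemma fps_inverse_nth_1:
  fixes p :: "'a::field fps"
  assumes "fps_nth p 0 = 1"
  shows "fps_nth (inverse p) 1 = - fps_nth p 1"
proof -
  have "fps_nth (p * inverse p) 1 = 0"
    using assms by (simp add: inverse_mult_eq_1')
  with assms show ?thesis
    by (simp add: fps_mult_nth_1 eq_neg_iff_add_eq_0 add.commute)
qed

lemma fps_power_int_nth_0_1:
  fixes p :: "'a::field fps"
  assumes p0: "fps_nth p 0 = 1"
  shows "fps_nth (p powi m) 0 = 1" "fps_nth (p powi m) 1 = of_int m * fps_nth p 1"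
proof -
  have inv0: "fps_nth (inverse p) 0 = 1" using p0 by simp
  show "fps_nth (p powi m) 0 = 1"
    using p0 inv0 by (simp add: power_int_def fps_power_zeroth_eq_one)
  show "fps_nth (p powi m) 1 = of_int m * fps_nth p 1"
  proof (cases "m \<ge> 0")
    case True
    then show ?thesis
      using fps_power_first_eq[OF p0, of "nat m"] by (simp add: power_int_def)
  next
    case False
    then show ?thesis
      using fps_power_first_eq[OF inv0, of "nat (- m)"] fps_inverse_nth_1[OF p0]
      by (simp add: power_int_def)
  qed
qed

definition zeta_product :: "(int \<times> nat \<times> int) list \<Rightarrow> rat fps" where
  "zeta_product rs = (\<Prod>(\<Delta>, r, m)\<leftarrow>rs. (1 + fps_const (of_int \<Delta>) * fps_X ^ r) powi m)"

lemma zeta_repr_iff: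
  "zeta_repr z rs \<longleftrightarrow>
    (\<forall>(\<Delta>, r, m)\<in>set rs. (\<Delta> = 1 \<or> \<Delta> = -1) \<and> r > 0 \<and> m \<noteq> 0) \<and> z = zeta_product rs"
  unfolding zeta_repr_def zeta_product_def ..

lemma zeta_product_nth_0_1:
  assumes "\<forall>(\<Delta>, r, m)\<in>set rs. r > 0"
  shows "fps_nth (zeta_product rs) 0 = 1"
    "fps_nth (zeta_product rs) 1 = (\<Sum>(\<Delta>, r, m)\<leftarrow>rs. if r = 1 then of_int (m * \<Delta>) else 0)"
proof -
  have "fps_nth (zeta_product rs) 0 = 1 \<and>
    fps_nth (zeta_product rs) 1 = (\<Sum>(\<Delta>, r, m)\<leftarrow>rs. if r = 1 then of_int (m * \<Delta>) else 0)"
    using assms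
  proof (induction rs)
    case (Cons e rs)
    obtain \<Delta> r m where e: "e = (\<Delta>, r, m)" by (cases e)
    let ?G = "1 + fps_const (of_int \<Delta>) * fps_X ^ r :: rat fps"
    have "r > 0" using Cons.prems e by auto
    then have "fps_nth ?G 0 = 1" "fps_nth ?G 1 = (if r = 1 then of_int \<Delta> else 0)"
      by auto
    then have "fps_nth (?G powi m) 0 = 1"
      "fps_nth (?G powi m) 1 = (if r = 1 then of_int (m * \<Delta>) else 0)"
      using fps_power_int_nth_0_1[of ?G m] by auto
    with Cons e show ?case
      by (simp add: zeta_product_def fps_mult_nth_1)
  qed (simp add: zeta_product_def)
  then show "fps_nth (zeta_product rs) 0 = 1"
    "fps_nth (zeta_product rs) 1 = (\<Sum>(\<Delta>, r, m)\<leftarrow>rs. if r = 1 then of_int (m * \<Delta>) else 0)"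
    by simp_all
qed

lemma zeta_product_filter_nonzero:
  "zeta_product (filter (\<lambda>(\<Delta>, r, m). m \<noteq> 0) rs) = zeta_product rs"
  by (induction rs) (auto simp: zeta_product_def)

definition periods :: "(int \<times> nat \<times> int) list \<Rightarrow> nat set" where
  "periods rs = set (map (\<lambda>(\<Delta>, r, m). r) rs)"

lemma MPer_L_periods:
  "MPer_L X f = (if lefschetz_zeta X f = 1 then {}
     else \<Inter> {periods rs | rs. zeta_repr (lefschetz_zeta X f) rs})"
  unfolding MPer_L_def periods_def ..

lemma MPer_L_eq_singleton_1:
  assumes R: "zeta_repr (lefschetz_zeta X f) rs" and "periods rs \<subseteq> {1}"
    and nz: "fps_nth (lefschetz_zeta X f) 1 \<noteq> 0"
  shows "MPer_L X f = {1}"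
proof -
  have "1 \<in> periods rs'" if R': "zeta_repr (lefschetz_zeta X f) rs'" for rs'
  proof (rule ccontr)
    assume "1 \<notin> periods rs'"
    then have "(\<Sum>(\<Delta>, r, m)\<leftarrow>rs'. if r = 1 then of_int (m * \<Delta>) else (0::rat)) = 0"
      unfolding periods_def by (induction rs') auto
    moreover have "\<forall>(\<Delta>, r, m)\<in>set rs'. r > 0" and "lefschetz_zeta X f = zeta_product rs'"
      using R' unfolding zeta_repr_iff by auto
    ultimately show False
      using nz zeta_product_nth_0_1(2)[of rs'] by simp
  qed
  then have "1 \<in> \<Inter> {periods rs | rs. zeta_repr (lefschetz_zeta X f) rs}"
    by blast
  moreover have "\<Inter> {periods rs | rs. zeta_repr (lefschetz_zeta X f) rs} \<subseteq> periods rs"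
    using R by blast
  moreover have "lefschetz_zeta X f \<noteq> 1"
    using nz by auto
  ultimately show ?thesis
    using \<open>periods rs \<subseteq> {1}\<close> unfolding MPer_L_periods by auto
qed

lemma MPer_L_eq_empty:
  assumes "zeta_repr (lefschetz_zeta X f) rs" "zeta_repr (lefschetz_zeta X f) rs'"
    and "periods rs \<inter> periods rs' = {}"
  shows "MPer_L X f = {}"
proof -
  have "\<Inter> {periods rs | rs. zeta_repr (lefschetz_zeta X f) rs} \<subseteq> periods rs \<inter> periods rs'"
    using assms(1,2) by blast
  with assms(3) show ?thesis
    unfolding MPer_L_periods by auto
qed

lemma fps_power_int_mult_distrib:
  fixes F G :: "'a::field fps"
  shows "(F * G) powi m = F powi m * G powi m"
  by (simp add: power_int_def power_mult_distrib fps_inverse_mult)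

lemma MPer_L_two_periodic:
  assumes L: "\<forall>m>0. lefschetz_number X (f ^^ m) = (if odd m then 2 * of_int p else 2 * of_int q)"
  shows "MPer_L X f = (if p = 0 then {} else {1})"
proof -
  define rs :: "(int \<times> nat \<times> int) list" where "rs = [(-1, 1, - (p + q)), (1, 1, p - q)]"
  have zeta: "lefschetz_zeta X f = zeta_product rs"
    unfolding lefschetz_zeta_two_periodic[OF L] rs_def zeta_product_def by (simp flip: fps_const_neg)
  have R: "zeta_repr (lefschetz_zeta X f) (filter (\<lambda>(\<Delta>, r, m). m \<noteq> 0) rs)"
    unfolding zeta_repr_iff zeta_product_filter_nonzero zeta by (auto simp: rs_def)
  show ?thesis
  proof (cases "p = 0")
    case False
    have "fps_nth (lefschetz_zeta X f) 1 = 2 * of_int p"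
      using zeta_product_nth_0_1(2)[of rs] unfolding zeta by (simp add: rs_def)
    with False show ?thesis
      using MPer_L_eq_singleton_1[OF R] by (auto simp: periods_def rs_def)
  next
    case True
    show ?thesis
    proof (cases "q = 0")
      case True
      then show ?thesis
        using \<open>p = 0\<close> lefschetz_zeta_two_periodic[OF L] by (simp add: MPer_L_periods)
    next
      case False
      text \<open>Now the zeta function is (1 - t)^(-q) (1 + t)^(-q) = (1 - t^2)^(-q), with
        representations of period sets {1} and {2}.\<close>
      define rs' :: "(int \<times> nat \<times> int) list" where "rs' = [(-1, 2, - q)]"
      have sq: "(1 - fps_X) * (1 + fps_X :: rat fps) = 1 - fps_X ^ 2"
        by (simp add: algebra_simps power2_eq_square)
      have "lefschetz_zeta X f = ((1 - fps_X) * (1 + fps_X)) powi (- q)"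
        using \<open>p = 0\<close> lefschetz_zeta_two_periodic[OF L] by (simp add: fps_power_int_mult_distrib)
      also have "\<dots> = zeta_product rs'"
        unfolding sq by (simp add: rs'_def zeta_product_def flip: fps_const_neg)
      finally have "lefschetz_zeta X f = zeta_product rs'" .
      then have "zeta_repr (lefschetz_zeta X f) rs'"
        using False by (simp add: zeta_repr_iff rs'_def)
      moreover have "periods (filter (\<lambda>(\<Delta>, r, m). m \<noteq> 0) rs) \<inter> periods rs' = {}"
        by (auto simp: periods_def rs_def rs'_def)
      ultimately show ?thesis
        using \<open>p = 0\<close> MPer_L_eq_empty[OF R] by simp
    qed
  qed
qed

lemma prod_one_plus_sign:
  fixes e :: "nat \<Rightarrow> int"
  assumes "l \<ge> 1" and "\<forall>i<l. e i = 1 \<or> e i = -1"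
  shows "(\<Prod>i<l. 1 + e i) = 2 * (if \<forall>i<l. e i = 1 then 2 ^ (l - 1) else 0)"
proof (cases "\<forall>i<l. e i = 1")
  case True
  then have "(\<Prod>i<l. 1 + e i) = 2 ^ l" by simp
  with True \<open>l \<ge> 1\<close> show ?thesis
    by (simp add: power_eq_if)
next
  case False
  with assms(2) obtain i where "i < l" "1 + e i = 0" by force
  with False show ?thesis
    by (simp add: prod_zero_iff) blast
qed

theorem lemma3p2:
  fixes l :: nat and n :: "nat \<Rightarrow> nat" and blk :: "'d::finite \<Rightarrow> nat"
    and f :: "real^'d \<Rightarrow> real^'d" and a :: "nat \<Rightarrow> int"
  assumes "l \<ge> 1"
    and "1 \<le> n 0" and "\<forall>i. Suc i < l \<longrightarrow> n i < n (Suc i)"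
    and "\<forall>d. blk d < l" and "\<forall>i<l. card {d. blk d = i} = n i + 1"
    and "C1_map_on (sphere_prod blk l) f"
    and "quasi_unipotent (top_of_set (sphere_prod blk l)) f"
    and "basic_eigenvalues (top_of_set (sphere_prod blk l)) f l n a"
  shows "((\<forall>i<l. (-1) ^ n i * a i = 1) \<longrightarrow> MPer_L (top_of_set (sphere_prod blk l)) f = {1})
    \<and> ((\<exists>i<l. (-1) ^ n i * a i = -1) \<longrightarrow> MPer_L (top_of_set (sphere_prod blk l)) f = {})"
proof -
  define X where "X = top_of_set (sphere_prod blk l)"
  define p :: int where "p = (if \<forall>i<l. (-1) ^ n i * a i = 1 then 2 ^ (l - 1) else 0)"
  define q :: int where "q = (if \<forall>i<l. (-1) ^ n i = (1::int) then 2 ^ (l - 1) else 0)"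
  have f: "continuous_map X X f"
    unfolding X_def using assms(6) by (rule continuous_map_C1_map_on)
  have BE: "basic_eigenvalues X f l n a" and QU: "quasi_unipotent X f"
    using assms(8,7) unfolding X_def by auto
  have unit: "a i = 1 \<or> a i = -1" if "i < l" for i
    using basic_eigenvalue_unit[OF BE QU that] .
  have "lefschetz_number X (f ^^ m) = (if odd m then 2 * of_int p else 2 * of_int q)" for m
  proof -
    let ?e = "\<lambda>i. (-1) ^ n i * (if odd m then a i else 1)"
    have "\<forall>i<l. ?e i = 1 \<or> ?e i = -1"
      using unit by (auto simp: minus_one_power_iff)
    have "lefschetz_number X (f ^^ m) = of_int (\<Prod>i<l. 1 + ?e i)"
      by (rule lefschetz_number_funpow_unit[OF f BE unit])
    also have "\<dots> = of_int (2 * (if \<forall>i<l. ?e i = 1 then 2 ^ (l - 1) else 0))"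
      by (simp only: prod_one_plus_sign[OF \<open>l \<ge> 1\<close> \<open>\<forall>i<l. ?e i = 1 \<or> ?e i = -1\<close>])
    also have "\<dots> = (if odd m then 2 * of_int p else 2 * of_int q)"
      by (simp add: p_def q_def)
    finally show ?thesis .
  qed
  then have "MPer_L X f = (if p = 0 then {} else {1})"
    by (intro MPer_L_two_periodic) blast
  then show ?thesis
    unfolding X_def p_def by auto
qed

end
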